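(* (Rodrigues formula.) Let $k\in\mathbb{N}$, let $H_k\in\mathcal{H}_k$ be a Dunkl-harmonic of degree $k$, and let $t$ be a positive integer. Then the Clifford--Hermite polynomial $C\!H_{2t}^{\mu}(H_k)=(D_+)^{2t}H_k$ satisfies \[ C\!H_{2t}^{\mu}(H_k) = \exp(|x|^2/2)\,\big(-\Delta_{\kappa} - |x|^2 + 2\mathbb{E} + \mu\big)^{t}\,\big(\exp(-|x|^2/2)\, H_k\big) = \exp(|x|^2)\,(-\Delta_{\kappa})^t\,\big(\exp(-|x|^2)\, H_k\big). \]
   Context: Let $R\subset\mathbb{R}^m$ be a reduced root system normalized so that $\langle\alpha,\alpha\rangle=2$ for all $\alpha\in R$, with positive subsystem $R_+$, and let $G\subset O(m)$ be the finite reflection group generated by the reflections $r_\alpha(x)=x-2\frac{\langle\alpha,x\rangle}{|\alpha|^2}\alpha$, $\alpha\in R$. Let $\kappa:R\to\mathbb{C}$ be a $G$-invariant multiplicity function, $\kappa_\alpha=\kappa(\alpha)$. The Dunkl operators are $T_i f(x)=\partial_{x_i}f(x)+\sum_{\alpha\in R_+}\kappa_\alpha\alpha_i\frac{f(x)-f(r_\alpha x)}{\langle\alpha,x\rangle}$, $i=1,\dots,m$; they commute. The Dunkl Laplacian is $\Delta_\kappa=\sum_{i=1}^m T_i^2$. Put $\gamma=\sum_{\alpha\in R_+}\kappa_\alpha$ and $\mu=m+2\gamma$ (the Dunkl dimension). $\mathbb{E}=\sum_{i=1}^m x_i\partial_{x_i}$ is the Euler operator. $\mathcal{P}_k$ denotes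 real homogeneous polynomials of degree $k$ on $\mathbb{R}^m$ and $\mathcal{H}_k=\mathcal{P}_k\cap\ker\Delta_\kappa$ the Dunkl-harmonics of degree $k$. Let $\mathcal{C}l_{0,m}$ be the Clifford algebra generated by $e_1,\dots,e_m$ with $e_ie_j+e_je_i=-2\delta_{ij}$. Set $\underline{x}=\sum_i e_ix_i$, the Dunkl Dirac operator $D_\kappa=\sum_i e_iT_i$, and $D_+=-D_\kappa+2\underline{x}$, acting on $\mathcal{C}l_{0,m}$-valued polynomials. The Clifford--Hermite polynomial of degree $2t$ associated with $H_k\in\mathcal{H}_k$ is $C\!H_{2t}^{\mu}(H_k)=(D_+)^{2t}H_k$ (a scalar polynomial, since $D_+^2=-\Delta_\kappa-4|x|^2+2(2\mathbb{E}+\mu)$). *)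

theory Defs
  imports "HOL-Analysis.Analysis"
begin

definition refl :: "real^'n \<Rightarrow> real^'n \<Rightarrow> real^'n" where
  "refl \<alpha> x = x - (2 * (\<alpha> \<bullet> x) / (\<alpha> \<bullet> \<alpha>)) *\<^sub>R \<alpha>"

definition root_system :: "(real^'n) set \<Rightarrow> bool" where
  "root_system R \<longleftrightarrow> finite R \<and> 0 \<notin> R
     \<and> (\<forall>\<alpha>\<in>R. \<alpha> \<bullet> \<alpha> = 2)
     \<and> (\<forall>\<alpha>\<in>R. \<forall>\<beta>\<in>R. refl \<alpha> \<beta> \<in> R)
     \<and> (\<forall>\<alpha>\<in>R. \<forall>c::real. c *\<^sub>R \<alpha> \<in> R \<longrightarrow> c = 1 \<or> c = -1)"

definition positive_subsystem :: "(real^'n) set \<Rightarrow> (real^'n) set \<Rightarrow> bool" where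
  "positive_subsystem R Rp \<longleftrightarrow>
     (\<exists>\<beta>. (\<forall>\<alpha>\<in>R. \<alpha> \<bullet> \<beta> \<noteq> 0) \<and> Rp = {\<alpha>\<in>R. \<alpha> \<bullet> \<beta> > 0})"

inductive_set refl_group :: "(real^'n) set \<Rightarrow> (real^'n \<Rightarrow> real^'n) set"
  for R where
    id_in: "id \<in> refl_group R"
  | step: "g \<in> refl_group R \<Longrightarrow> \<alpha> \<in> R \<Longrightarrow> refl \<alpha> \<circ> g \<in> refl_group R"

definition G_invariant :: "(real^'n) set \<Rightarrow> (real^'n \<Rightarrow> complex) \<Rightarrow> bool" where
  "G_invariant R \<kappa> \<longleftrightarrow> (\<forall>g\<in>refl_group R. \<forall>\<alpha>\<in>R. \<kappa> (g \<alpha>) = \<kappa> \<alpha>)"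

definition partial :: "'n::finite \<Rightarrow> (real^'n \<Rightarrow> complex) \<Rightarrow> real^'n \<Rightarrow> complex" where
  "partial i f x = vector_derivative (\<lambda>s. f (x + s *\<^sub>R axis i 1)) (at 0)"

definition diff_quot :: "real^'n \<Rightarrow> (real^'n \<Rightarrow> complex) \<Rightarrow> real^'n \<Rightarrow> complex" where
  "diff_quot \<alpha> f x =
     (if \<alpha> \<bullet> x \<noteq> 0 then (f x - f (refl \<alpha> x)) / complex_of_real (\<alpha> \<bullet> x)
      else Lim (at x within {y. \<alpha> \<bullet> y \<noteq> 0})
             (\<lambda>y. (f y - f (refl \<alpha> y)) / complex_of_real (\<alpha> \<bullet> y)))"

definition dunkl :: "(real^'n::finite) set \<Rightarrow> (real^'n \<Rightarrow> complex) \<Rightarrow> 'n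
      \<Rightarrow> (real^'n \<Rightarrow> complex) \<Rightarrow> real^'n \<Rightarrow> complex" where
  "dunkl Rp \<kappa> i f x = partial i f x
     + (\<Sum>\<alpha>\<in>Rp. \<kappa> \<alpha> * complex_of_real (\<alpha> $ i) * diff_quot \<alpha> f x)"

definition dunkl_laplacian :: "(real^'n::finite) set \<Rightarrow> (real^'n \<Rightarrow> complex)
      \<Rightarrow> (real^'n \<Rightarrow> complex) \<Rightarrow> real^'n \<Rightarrow> complex" where
  "dunkl_laplacian Rp \<kappa> f x = (\<Sum>i\<in>UNIV. dunkl Rp \<kappa> i (dunkl Rp \<kappa> i f) x)"

definition euler_op :: "(real^'n::finite \<Rightarrow> complex) \<Rightarrow> real^'n \<Rightarrow> complex" where
  "euler_op f x = (\<Sum>i\<in>UNIV. complex_of_real (x $ i) * partial i f x)"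

definition dunkl_gamma :: "(real^'n) set \<Rightarrow> (real^'n \<Rightarrow> complex) \<Rightarrow> complex" where
  "dunkl_gamma Rp \<kappa> = (\<Sum>\<alpha>\<in>Rp. \<kappa> \<alpha>)"

definition dunkl_dim :: "(real^'n::finite) set \<Rightarrow> (real^'n \<Rightarrow> complex) \<Rightarrow> complex" where
  "dunkl_dim Rp \<kappa> = of_nat CARD('n) + 2 * dunkl_gamma Rp \<kappa>"

definition homogeneous_poly :: "nat \<Rightarrow> ((real^'n::finite) \<Rightarrow> real) \<Rightarrow> bool" where
  "homogeneous_poly k H \<longleftrightarrow>
     (\<exists>c :: ('n \<Rightarrow> nat) \<Rightarrow> real.
        H = (\<lambda>x. \<Sum>a\<in>{a. sum a UNIV = k}. c a * (\<Prod>i\<in>UNIV. (x $ i) ^ a i)))"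

definition dunkl_harmonic :: "(real^'n::finite) set \<Rightarrow> (real^'n \<Rightarrow> complex) \<Rightarrow> nat
      \<Rightarrow> (real^'n \<Rightarrow> real) \<Rightarrow> bool" where
  "dunkl_harmonic Rp \<kappa> k H \<longleftrightarrow> homogeneous_poly k H
     \<and> (\<forall>x. dunkl_laplacian Rp \<kappa> (\<lambda>y. complex_of_real (H y)) x = 0)"

section \<open>Clifford algebra \<open>Cl_{0,m}\<close> (complexified), basis \<open>e_A\<close>, \<open>A \<subseteq> {1..m}\<close>\<close>

type_synonym 'n cl = "'n set \<Rightarrow> complex"

text \<open>\<open>e_A e_B = sign(A,B) e_{A \<triangle> B}\<close>, with \<open>e_i e_j + e_j e_i = -2 \<delta>_ij\<close>.\<close>
definition cl_sign :: "'n::{finite,linorder} set \<Rightarrow> 'n set \<Rightarrow> complex" where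
  "cl_sign A B = (-1) ^ (card {(i,j). i \<in> A \<and> j \<in> B \<and> j < i} + card (A \<inter> B))"

definition cl_mult :: "'n::{finite,linorder} cl \<Rightarrow> 'n cl \<Rightarrow> 'n cl" where
  "cl_mult a b = (\<lambda>C. \<Sum>A\<in>UNIV. \<Sum>B\<in>UNIV.
      if (A - B) \<union> (B - A) = C then cl_sign A B * a A * b B else 0)"

definition cl_e :: "'n \<Rightarrow> 'n cl" where
  "cl_e i = (\<lambda>A. if A = {i} then 1 else 0)"

definition cl_scalar :: "complex \<Rightarrow> 'n cl" where
  "cl_scalar z = (\<lambda>A. if A = {} then z else 0)"

definition cl_vec :: "real^'n::finite \<Rightarrow> 'n cl" where
  "cl_vec x = (\<lambda>A. \<Sum>i\<in>UNIV. complex_of_real (x $ i) * cl_e i A)"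

definition dunkl_cl :: "(real^'n::finite) set \<Rightarrow> (real^'n \<Rightarrow> complex) \<Rightarrow> 'n
      \<Rightarrow> (real^'n \<Rightarrow> 'n cl) \<Rightarrow> real^'n \<Rightarrow> 'n cl" where
  "dunkl_cl Rp \<kappa> i F x = (\<lambda>A. dunkl Rp \<kappa> i (\<lambda>y. F y A) x)"

definition dunkl_dirac :: "((real,'n::{finite,linorder}) vec) set \<Rightarrow> ((real,'n) vec \<Rightarrow> complex)
      \<Rightarrow> ((real,'n) vec \<Rightarrow> 'n cl) \<Rightarrow> (real,'n) vec \<Rightarrow> 'n cl" where
  "dunkl_dirac Rp \<kappa> F x =
     (\<lambda>C. \<Sum>i\<in>UNIV. cl_mult (cl_e i) (dunkl_cl Rp \<kappa> i F x) C)"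

definition D_plus :: "((real,'n::{finite,linorder}) vec) set \<Rightarrow> ((real,'n) vec \<Rightarrow> complex)
      \<Rightarrow> ((real,'n) vec \<Rightarrow> 'n cl) \<Rightarrow> (real,'n) vec \<Rightarrow> 'n cl" where
  "D_plus Rp \<kappa> F x =
     (\<lambda>C. - dunkl_dirac Rp \<kappa> F x C + 2 * cl_mult (cl_vec x) (F x) C)"

definition clifford_hermite :: "((real,'n::{finite,linorder}) vec) set \<Rightarrow> ((real,'n) vec \<Rightarrow> complex) \<Rightarrow> nat
      \<Rightarrow> ((real,'n) vec \<Rightarrow> real) \<Rightarrow> (real,'n) vec \<Rightarrow> 'n cl" where
  "clifford_hermite Rp \<kappa> s H =
     (D_plus Rp \<kappa> ^^ s) (\<lambda>x. cl_scalar (complex_of_real (H x)))"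

end

theory Submission
  imports Defs
begin

text \<open>
  All computations take place on polynomials, where the Dunkl operators \<open>T\<^sub>i\<close> are linear, obey
  Leibniz rules against coordinates and against Gaussians, and commute; commutativity follows by
  induction on polynomials from the equivariance \<open>T\<^sub>\<xi>(f \<circ> r\<^sub>\<beta>) = (T\<^bsub>r\<^sub>\<beta> \<xi>\<^esub> f) \<circ> r\<^sub>\<beta>\<close>, which
  rests on the \<open>G\<close>-invariance of \<open>\<kappa>\<close>.

  On a scalar \<open>P\<close> one has \<open>D\<^sub>+ P = -\<Sum>\<^sub>i e\<^sub>i (T\<^sub>i - 2x\<^sub>i) P\<close>. Since the operators \<open>T\<^sub>i - 2x\<^sub>i\<close> commute
  and \<open>e\<^sub>i e\<^sub>j + e\<^sub>j e\<^sub>i = -2\<delta>\<^sub>i\<^sub>j\<close>, a second application of \<open>D\<^sub>+\<close> gives the scalar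
  \<open>-\<Sum>\<^sub>i (T\<^sub>i - 2x\<^sub>i)\<^sup>2 P = -\<Delta>\<^sub>\<kappa>P - 4|x|\<^sup>2P + 2(2\<bbbE> + \<mu>)P\<close>, so \<open>D\<^sub>+\<^bsup>2t\<^esup>\<close> acts on scalar
  polynomials as the \<open>t\<close>-th power of this operator.

  Conjugation by a Gaussian turns \<open>T\<^sub>i\<close> into \<open>T\<^sub>i + 2a x\<^sub>i\<close>:
  \<open>T\<^sub>i(e\<^bsup>a|x|\<^sup>2\<^esup>P) = e\<^bsup>a|x|\<^sup>2\<^esup>(T\<^sub>i + 2a x\<^sub>i)P\<close>. For \<open>a = -1\<close> this makes \<open>e\<^bsup>-|x|\<^sup>2\<^esup>\<close> intertwine
  \<open>-\<Delta>\<^sub>\<kappa>\<close> with \<open>D\<^sub>+\<^sup>2\<close>; for \<open>a = -1/2\<close>, together with \<open>\<bbbE>(e\<^bsup>a|x|\<^sup>2\<^esup>P) = e\<^bsup>a|x|\<^sup>2\<^esup>(\<bbbE> + 2a|x|\<^sup>2)P\<close>,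
  it makes \<open>e\<^bsup>-|x|\<^sup>2/2\<^esup>\<close> intertwine \<open>-\<Delta>\<^sub>\<kappa> - |x|\<^sup>2 + 2\<bbbE> + \<mu>\<close> with \<open>D\<^sub>+\<^sup>2\<close>. Iterating gives both
  formulas.
\<close>

lemma funpow_intertwine:
  assumes inv: "\<And>x. A x \<Longrightarrow> A (f x)" and comm: "\<And>x. A x \<Longrightarrow> g (h x) = h (f x)" and "A x"
  shows "(g ^^ n) (h x) = h ((f ^^ n) x)"
proof (induction n)
  case (Suc n)
  have "A ((f ^^ n) x)" using \<open>A x\<close> inv by (induction n) auto
  then show ?case using Suc comm by simp
qed simp

section \<open>Polynomial functions\<close>

inductive poly_fun :: "(real^'n::finite \<Rightarrow> complex) \<Rightarrow> bool" where
  poly_fun_const: "poly_fun (\<lambda>x. c)"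
| poly_fun_coord_mult: "poly_fun f \<Longrightarrow> poly_fun (\<lambda>x. complex_of_real (x$l) * f x)"
| poly_fun_add: "poly_fun f \<Longrightarrow> poly_fun g \<Longrightarrow> poly_fun (\<lambda>x. f x + g x)"

lemma poly_fun_scale: "poly_fun f \<Longrightarrow> poly_fun (\<lambda>x. c * f x)"
proof (induction rule: poly_fun.induct)
  case (poly_fun_const d)
  then show ?case using poly_fun.poly_fun_const[of "c * d"] by simp
next
  case (poly_fun_coord_mult f l)
  then show ?case
    using poly_fun.poly_fun_coord_mult[of "\<lambda>x. c * f x" l] by (simp add: algebra_simps)
next
  case (poly_fun_add f g)
  then show ?case using poly_fun.poly_fun_add[OF poly_fun_add.IH] by (simp add: algebra_simps)
qed

lemma poly_fun_mult: "poly_fun f \<Longrightarrow> poly_fun g \<Longrightarrow> poly_fun (\<lambda>x. f x * g x)"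
proof (induction rule: poly_fun.induct)
  case (poly_fun_const d)
  then show ?case using poly_fun_scale[of g d] by simp
next
  case (poly_fun_coord_mult f l)
  then show ?case
    using poly_fun.poly_fun_coord_mult[of "\<lambda>x. f x * g x" l] by (simp add: algebra_simps)
next
  case (poly_fun_add f f')
  then show ?case using poly_fun.poly_fun_add[OF poly_fun_add.IH] by (simp add: algebra_simps)
qed

lemma poly_fun_coord: "poly_fun (\<lambda>x. complex_of_real (x$l))"
  using poly_fun_coord_mult[OF poly_fun_const[of 1]] by simp

lemma poly_fun_uminus: "poly_fun f \<Longrightarrow> poly_fun (\<lambda>x. - f x)"
  using poly_fun_scale[of f "-1"] by simp

lemma poly_fun_diff: "poly_fun f \<Longrightarrow> poly_fun g \<Longrightarrow> poly_fun (\<lambda>x. f x - g x)"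
  using poly_fun_add[OF _ poly_fun_uminus] by simp

lemma poly_fun_sum: "(\<And>a. a \<in> I \<Longrightarrow> poly_fun (F a)) \<Longrightarrow> poly_fun (\<lambda>x. \<Sum>a\<in>I. F a x)"
  by (induction I rule: infinite_finite_induct) (auto intro: poly_fun_const poly_fun_add)

lemma poly_fun_prod: "(\<And>a. a \<in> I \<Longrightarrow> poly_fun (F a)) \<Longrightarrow> poly_fun (\<lambda>x. \<Prod>a\<in>I. F a x)"
  by (induction I rule: infinite_finite_induct) (auto intro: poly_fun_const poly_fun_mult)

lemma poly_fun_power: "poly_fun f \<Longrightarrow> poly_fun (\<lambda>x. f x ^ n)"
  by (induction n) (auto intro: poly_fun_const poly_fun_mult)

lemma homogeneous_poly_imp_poly_fun:
  assumes "homogeneous_poly k H"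
  shows "poly_fun (\<lambda>x. complex_of_real (H x))"
proof -
  obtain c where "H = (\<lambda>x. \<Sum>a\<in>{a. sum a UNIV = k}. c a * (\<Prod>i\<in>UNIV. (x $ i) ^ a i))"
    using assms by (auto simp: homogeneous_poly_def)
  then have "(\<lambda>x. complex_of_real (H x)) =
      (\<lambda>x. \<Sum>a\<in>{a. sum a UNIV = k}. complex_of_real (c a) * (\<Prod>i\<in>UNIV. complex_of_real (x $ i) ^ a i))"
    by (simp add: of_real_sum of_real_prod)
  moreover have "poly_fun \<dots>"
    by (intro poly_fun_sum poly_fun_scale poly_fun_prod poly_fun_power poly_fun_coord)
  ultimately show ?thesis by simp
qed

lemma has_derivative_coord:
  "((\<lambda>x::real^'n::finite. complex_of_real (x$l)) has_derivative (\<lambda>h. complex_of_real (h$l))) F"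
  by (intro has_derivative_of_real bounded_linear_imp_has_derivative bounded_linear_vec_nth)

lemma differentiable_coord: "(\<lambda>x::real^'n::finite. complex_of_real (x$l)) differentiable F"
  using has_derivative_coord differentiable_def by blast

lemma poly_fun_continuous_on: "poly_fun f \<Longrightarrow> continuous_on UNIV f"
  by (induction rule: poly_fun.induct) (auto intro!: continuous_intros)

lemma poly_fun_differentiable: "poly_fun f \<Longrightarrow> f differentiable (at x)"
proof (induction rule: poly_fun.induct)
  case (poly_fun_coord_mult f l)
  then show ?case using differentiable_coord by (intro differentiable_mult)
qed (auto intro!: differentiable_add)

lemma partial_eq_derivative:
  assumes "(f has_derivative D) (at x)"
  shows "partial i f x = D (axis i 1)"
proof -
  have "((\<lambda>s::real. x + s *\<^sub>R axis i 1) has_derivative (\<lambda>s. s *\<^sub>R axis i 1)) (at 0)"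
    by (auto intro!: derivative_eq_intros)
  then have "((\<lambda>s. f (x + s *\<^sub>R axis i 1)) has_derivative (\<lambda>s. D (s *\<^sub>R axis i 1))) (at 0)"
    using has_derivative_compose[of "\<lambda>s::real. x + s *\<^sub>R axis i 1" _ 0 UNIV f D] assms by simp
  moreover have "(\<lambda>s. D (s *\<^sub>R axis i 1)) = (\<lambda>s. s *\<^sub>R D (axis i 1))"
    using linear_scale[OF has_derivative_linear[OF assms]] by auto
  ultimately have "((\<lambda>s. f (x + s *\<^sub>R axis i 1)) has_vector_derivative D (axis i 1)) (at 0)"
    by (simp add: has_vector_derivative_def)
  then show ?thesis unfolding partial_def by (rule vector_derivative_at)
qed

lemma partial_add:
  assumes "f differentiable (at x)" "g differentiable (at x)"
  shows "partial i (\<lambda>y. f y + g y) x = partial i f x + partial i g x"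
proof -
  obtain Df Dg where d: "(f has_derivative Df) (at x)" "(g has_derivative Dg) (at x)"
    using assms differentiable_def by blast
  from partial_eq_derivative[OF has_derivative_add[OF d]] show ?thesis
    by (simp add: partial_eq_derivative[OF d(1)] partial_eq_derivative[OF d(2)])
qed

lemma partial_mult:
  assumes "f differentiable (at x)" "g differentiable (at x)"
  shows "partial i (\<lambda>y. f y * g y) x = partial i f x * g x + f x * partial i g x"
proof -
  obtain Df Dg where d: "(f has_derivative Df) (at x)" "(g has_derivative Dg) (at x)"
    using assms differentiable_def by blast
  from partial_eq_derivative[OF has_derivative_mult[OF d]] show ?thesis
    by (simp add: partial_eq_derivative[OF d(1)] partial_eq_derivative[OF d(2)] algebra_simps)
qed

lemma partial_const: "partial i (\<lambda>y. c) x = 0"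
  using partial_eq_derivative[of "\<lambda>y. c" "\<lambda>h. 0" x i] by simp

lemma partial_coord: "partial i (\<lambda>y. complex_of_real (y$l)) x = (if i = l then 1 else 0)"
  using partial_eq_derivative[OF has_derivative_coord[of l]] by (simp add: axis_def)

lemma partial_coord_mult:
  assumes "f differentiable (at x)"
  shows "partial i (\<lambda>y. complex_of_real (y$l) * f y) x
    = (if i = l then f x else 0) + complex_of_real (x$l) * partial i f x"
  using partial_mult[OF differentiable_coord[of l] assms, of i] by (simp add: partial_coord)

lemma linear_eq_sum_axis:
  fixes D :: "real^'n::finite \<Rightarrow> 'a::real_vector"
  assumes "linear D"
  shows "D v = (\<Sum>k\<in>UNIV. v$k *\<^sub>R D (axis k 1))"
proof -
  have "D v = D (\<Sum>k\<in>UNIV. v$k *\<^sub>R axis k 1)"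
    using basis_expansion[of v] by (simp add: scalar_mult_eq_scaleR)
  then show ?thesis by (simp only: linear_sum[OF assms] linear_scale[OF assms])
qed

lemma poly_fun_partial: "poly_fun f \<Longrightarrow> poly_fun (partial i f)"
proof (induction rule: poly_fun.induct)
  case (poly_fun_const c)
  then show ?case by (simp add: partial_const poly_fun.poly_fun_const)
next
  case (poly_fun_coord_mult f l)
  then have "partial i (\<lambda>y. complex_of_real (y$l) * f y)
      = (\<lambda>x. (if i = l then f x else 0) + complex_of_real (x$l) * partial i f x)"
    using partial_coord_mult poly_fun_differentiable by blast
  then show ?case using poly_fun_coord_mult
    by (cases "i = l") (auto intro!: poly_fun_add poly_fun.poly_fun_coord_mult poly_fun_const)
next
  case (poly_fun_add f g)
  then have "partial i (\<lambda>y. f y + g y) = (\<lambda>x. partial i f x + partial i g x)"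
    using partial_add poly_fun_differentiable by blast
  then show ?case using poly_fun.poly_fun_add poly_fun_add.IH by simp
qed

lemma refl_eq: "\<alpha> \<bullet> \<alpha> = 2 \<Longrightarrow> refl \<alpha> x = x - (\<alpha> \<bullet> x) *\<^sub>R \<alpha>"
  by (simp add: refl_def)

lemma refl_component: "\<alpha> \<bullet> \<alpha> = 2 \<Longrightarrow> refl \<alpha> x $ l = x $ l - (\<alpha> \<bullet> x) * \<alpha> $ l"
  by (simp add: refl_eq)

lemma refl_root: "\<alpha> \<bullet> \<alpha> = 2 \<Longrightarrow> refl \<alpha> \<alpha> = - \<alpha>"
  by (simp add: refl_eq scaleR_2)

lemma refl_refl: "\<alpha> \<bullet> \<alpha> = 2 \<Longrightarrow> refl \<alpha> (refl \<alpha> x) = x"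
  by (simp add: refl_eq inner_diff_right algebra_simps)

lemma refl_fixes_hyperplane: "\<alpha> \<bullet> x = 0 \<Longrightarrow> refl \<alpha> x = x"
  by (simp add: refl_def)

lemma refl_uminus: "refl \<beta> (- \<gamma>) = - refl \<beta> \<gamma>"
  by (simp add: refl_def)

lemma refl_uminus_root: "refl (- \<alpha>) = refl \<alpha>"
  by (simp add: refl_def fun_eq_iff)

lemma linear_refl: "linear (refl \<beta>)"
  by (rule linearI) (simp_all add: refl_def inner_add_right algebra_simps add_divide_distrib)

lemma refl_has_derivative: "(refl \<beta> has_derivative refl \<beta>) (at x)"
  using linear_refl bounded_linear_imp_has_derivative linear_conv_bounded_linear by blast

lemma inner_refl_refl: "\<beta> \<bullet> \<beta> = 2 \<Longrightarrow> refl \<beta> u \<bullet> refl \<beta> v = u \<bullet> v"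
  by (simp add: refl_eq inner_diff_left inner_diff_right inner_commute algebra_simps)

lemma norm_refl: "\<beta> \<bullet> \<beta> = 2 \<Longrightarrow> norm (refl \<beta> x) = norm x"
  by (simp add: norm_eq_sqrt_inner inner_refl_refl)

lemma refl_refl_conj:
  assumes b: "\<beta> \<bullet> \<beta> = 2" and a: "\<alpha> \<bullet> \<alpha> = 2"
  shows "refl \<beta> (refl \<alpha> x) = refl (refl \<beta> \<alpha>) (refl \<beta> x)"
proof -
  have "refl \<beta> \<alpha> \<bullet> refl \<beta> \<alpha> = 2" using inner_refl_refl[OF b] a by simp
  then show ?thesis
    unfolding refl_eq[OF a] linear_diff[OF linear_refl] linear_scale[OF linear_refl]
    by (simp add: refl_eq inner_refl_refl[OF b])
qed

lemma continuous_on_compose_refl: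
  assumes "continuous_on UNIV f"
  shows "continuous_on UNIV (\<lambda>x. f (refl \<alpha> x))"
proof (rule continuous_on_compose2[OF assms])
  show "continuous_on UNIV (refl \<alpha>)"
    using linear_continuous_on linear_conv_bounded_linear linear_refl by blast
qed auto

lemma poly_fun_compose_refl: "poly_fun f \<Longrightarrow> \<alpha> \<bullet> \<alpha> = 2 \<Longrightarrow> poly_fun (\<lambda>x. f (refl \<alpha> x))"
proof (induction rule: poly_fun.induct)
  case (poly_fun_const c)
  then show ?case by (simp add: poly_fun.poly_fun_const)
next
  case (poly_fun_coord_mult f l)
  have "complex_of_real (refl \<alpha> x $ l) =
      complex_of_real (x$l) - (\<Sum>k\<in>UNIV. complex_of_real (\<alpha>$k * \<alpha>$l) * complex_of_real (x$k))"
    for x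
    by (simp add: refl_component[OF poly_fun_coord_mult.prems] inner_vec_def sum_distrib_right
        flip: of_real_mult of_real_sum) (simp add: mult_ac)
  then show ?case using poly_fun_coord_mult
    by (simp only:) (intro poly_fun_mult poly_fun_diff poly_fun_coord poly_fun_sum poly_fun_const
        poly_fun_coord_mult.IH)
next
  case (poly_fun_add f g)
  then show ?case using poly_fun.poly_fun_add by simp
qed

lemma partial_compose_refl:
  assumes b: "\<beta> \<bullet> \<beta> = 2" and f: "f differentiable (at (refl \<beta> x))"
  shows "partial j (\<lambda>x. f (refl \<beta> x)) x = partial j f (refl \<beta> x)
    - complex_of_real (\<beta>$j) * (\<Sum>k\<in>UNIV. complex_of_real (\<beta>$k) * partial k f (refl \<beta> x))"
proof -
  obtain D where D: "(f has_derivative D) (at (refl \<beta> x))"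
    using f differentiable_def by blast
  have l: "linear D" using D has_derivative_linear by blast
  have "partial j (\<lambda>x. f (refl \<beta> x)) x = D (refl \<beta> (axis j 1))"
    using has_derivative_compose[OF refl_has_derivative D] by (rule partial_eq_derivative)
  also have "\<dots> = D (axis j 1) - complex_of_real (\<beta>$j) * D \<beta>"
    by (simp add: refl_eq[OF b] linear_diff[OF l] linear_scale[OF l] inner_axis del: scaleR_conv_of_real)
      (simp add: scaleR_conv_of_real)
  also have "D \<beta> = (\<Sum>k\<in>UNIV. complex_of_real (\<beta>$k) * D (axis k 1))"
    by (subst linear_eq_sum_axis[OF l]) (simp add: scaleR_conv_of_real)
  finally show ?thesis by (simp add: partial_eq_derivative[OF D])
qed

lemma hyperplane_complement_limpt:
  fixes \<alpha> x :: "real^'n::finite"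
  assumes "\<alpha> \<noteq> 0" "\<alpha> \<bullet> x = 0"
  shows "x islimpt {y. \<alpha> \<bullet> y \<noteq> 0}"
  unfolding islimpt_approachable
proof (intro allI impI)
  fix e :: real
  assume e: "e > 0"
  define t where "t = e / (2 * norm \<alpha>)"
  have "t > 0" using e assms(1) by (simp add: t_def)
  then have "\<alpha> \<bullet> (x + t *\<^sub>R \<alpha>) \<noteq> 0" "x + t *\<^sub>R \<alpha> \<noteq> x"
    using assms by (simp_all add: inner_add_right)
  moreover have "dist (x + t *\<^sub>R \<alpha>) x < e"
    using \<open>t > 0\<close> e assms(1) by (simp add: dist_norm t_def)
  ultimately show "\<exists>x'\<in>{y. \<alpha> \<bullet> y \<noteq> 0}. x' \<noteq> x \<and> dist x' x < e" by blast
qed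

lemma diff_quot_off_hyperplane:
  "\<alpha> \<bullet> x \<noteq> 0 \<Longrightarrow> diff_quot \<alpha> f x = (f x - f (refl \<alpha> x)) / complex_of_real (\<alpha> \<bullet> x)"
  by (simp add: diff_quot_def)

text \<open>On the hyperplane \<open>\<langle>\<alpha>,x\<rangle> = 0\<close> the quotient is defined by \<open>Lim\<close>; a continuous \<open>h\<close> agreeing
  with it elsewhere identifies that limit.\<close>
lemma diff_quot_eqI:
  assumes "\<alpha> \<noteq> 0" and h: "continuous_on UNIV h"
    and q: "\<And>x. \<alpha> \<bullet> x \<noteq> 0 \<Longrightarrow> (f x - f (refl \<alpha> x)) / complex_of_real (\<alpha> \<bullet> x) = h x"
  shows "diff_quot \<alpha> f = h"
proof
  fix x
  show "diff_quot \<alpha> f x = h x"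
  proof (cases "\<alpha> \<bullet> x = 0")
    case False
    then show ?thesis using q by (simp add: diff_quot_def)
  next
    case True
    let ?S = "{y. \<alpha> \<bullet> y \<noteq> 0}"
    have "at x within ?S \<noteq> bot"
      using hyperplane_complement_limpt[OF assms(1) True] by (simp add: trivial_limit_within)
    moreover have "isCont h x" using h by (simp add: continuous_on_eq_continuous_at)
    then have "(h \<longlongrightarrow> h x) (at x within ?S)"
      unfolding isCont_def by (rule tendsto_within_subset[OF _ subset_UNIV])
    then have "((\<lambda>y. (f y - f (refl \<alpha> y)) / complex_of_real (\<alpha> \<bullet> y)) \<longlongrightarrow> h x) (at x within ?S)"
      by (rule Lim_transform_eventually) (auto simp: q eventually_at_filter)
    ultimately show ?thesis using True by (simp add: diff_quot_def tendsto_Lim)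
  qed
qed

lemma inner_mult_diff_quot:
  "\<alpha> \<bullet> \<alpha> = 2 \<Longrightarrow> complex_of_real (\<alpha> \<bullet> x) * diff_quot \<alpha> f x = f x - f (refl \<alpha> x)"
  by (cases "\<alpha> \<bullet> x = 0") (simp_all add: refl_fixes_hyperplane diff_quot_def)

lemma diff_quot_const: "\<alpha> \<bullet> \<alpha> = 2 \<Longrightarrow> diff_quot \<alpha> (\<lambda>x. c) = (\<lambda>x. 0)"
  by (rule diff_quot_eqI) auto

lemma diff_quot_add:
  assumes "\<alpha> \<bullet> \<alpha> = 2" "continuous_on UNIV (diff_quot \<alpha> f)" "continuous_on UNIV (diff_quot \<alpha> g)"
  shows "diff_quot \<alpha> (\<lambda>x. f x + g x) = (\<lambda>x. diff_quot \<alpha> f x + diff_quot \<alpha> g x)"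
  using assms
  by (intro diff_quot_eqI continuous_on_add)
    (auto simp: diff_quot_off_hyperplane add_divide_distrib diff_divide_distrib)

lemma diff_quot_scale:
  assumes "\<alpha> \<bullet> \<alpha> = 2" "continuous_on UNIV (diff_quot \<alpha> f)"
  shows "diff_quot \<alpha> (\<lambda>x. c * f x) = (\<lambda>x. c * diff_quot \<alpha> f x)"
  using assms
  by (intro diff_quot_eqI continuous_on_mult continuous_on_const)
    (auto simp: diff_quot_off_hyperplane simp flip: right_diff_distrib)

lemma diff_quot_coord_mult:
  assumes a: "\<alpha> \<bullet> \<alpha> = 2"
    and c: "continuous_on UNIV (diff_quot \<alpha> f)" "continuous_on UNIV f"
  shows "diff_quot \<alpha> (\<lambda>x. complex_of_real (x$l) * f x)
    = (\<lambda>x. complex_of_real (x$l) * diff_quot \<alpha> f x + complex_of_real (\<alpha>$l) * f (refl \<alpha> x))"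
proof (rule diff_quot_eqI)
  show "\<alpha> \<noteq> 0" using a by auto
  show "continuous_on UNIV
      (\<lambda>x. complex_of_real (x$l) * diff_quot \<alpha> f x + complex_of_real (\<alpha>$l) * f (refl \<alpha> x))"
    using c continuous_on_compose_refl[OF c(2)] by (intro continuous_intros)
  fix x
  assume "\<alpha> \<bullet> x \<noteq> 0"
  then show "(complex_of_real (x$l) * f x - complex_of_real (refl \<alpha> x $ l) * f (refl \<alpha> x))
        / complex_of_real (\<alpha> \<bullet> x)
      = complex_of_real (x$l) * diff_quot \<alpha> f x + complex_of_real (\<alpha>$l) * f (refl \<alpha> x)"
    by (simp add: diff_quot_off_hyperplane refl_component[OF a] field_simps)
qed

lemma poly_fun_diff_quot: "poly_fun f \<Longrightarrow> \<alpha> \<bullet> \<alpha> = 2 \<Longrightarrow> poly_fun (diff_quot \<alpha> f)"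
proof (induction rule: poly_fun.induct)
  case (poly_fun_const c)
  then show ?case by (simp add: diff_quot_const poly_fun.poly_fun_const)
next
  case (poly_fun_coord_mult f l)
  then show ?case
    by (simp add: diff_quot_coord_mult poly_fun_continuous_on)
      (intro poly_fun.poly_fun_add poly_fun.poly_fun_coord_mult poly_fun_scale poly_fun_compose_refl)
next
  case (poly_fun_add f g)
  then show ?case
    by (simp add: diff_quot_add poly_fun_continuous_on poly_fun.poly_fun_add)
qed

lemma continuous_on_diff_quot: "poly_fun f \<Longrightarrow> \<alpha> \<bullet> \<alpha> = 2 \<Longrightarrow> continuous_on UNIV (diff_quot \<alpha> f)"
  by (intro poly_fun_continuous_on poly_fun_diff_quot)

lemma diff_quot_uminus_root:
  assumes "\<alpha> \<bullet> \<alpha> = 2" "poly_fun f"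
  shows "diff_quot (- \<alpha>) f = (\<lambda>x. - diff_quot \<alpha> f x)"
  using assms
  by (intro diff_quot_eqI continuous_on_minus continuous_on_diff_quot)
    (auto simp: diff_quot_off_hyperplane refl_uminus_root divide_simps)

lemma diff_quot_compose_refl:
  assumes b: "\<beta> \<bullet> \<beta> = 2" and a: "\<alpha> \<bullet> \<alpha> = 2" and f: "poly_fun f"
  shows "diff_quot \<alpha> (\<lambda>x. f (refl \<beta> x)) = (\<lambda>x. diff_quot (refl \<beta> \<alpha>) f (refl \<beta> x))"
proof (rule diff_quot_eqI)
  have a': "refl \<beta> \<alpha> \<bullet> refl \<beta> \<alpha> = 2" using inner_refl_refl[OF b] a by simp
  show "\<alpha> \<noteq> 0" using a by auto
  show "continuous_on UNIV (\<lambda>x. diff_quot (refl \<beta> \<alpha>) f (refl \<beta> x))"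
    by (intro continuous_on_compose_refl continuous_on_diff_quot[OF f a'])
  fix x
  assume "\<alpha> \<bullet> x \<noteq> 0"
  then show "(f (refl \<beta> x) - f (refl \<beta> (refl \<alpha> x))) / complex_of_real (\<alpha> \<bullet> x)
      = diff_quot (refl \<beta> \<alpha>) f (refl \<beta> x)"
    by (simp add: diff_quot_off_hyperplane refl_refl_conj[OF b a] inner_refl_refl[OF b])
qed

definition gaussian :: "real \<Rightarrow> real^'n::finite \<Rightarrow> complex" where
  "gaussian a x = exp (complex_of_real (a * norm x ^ 2))"

lemma gaussian_refl: "\<alpha> \<bullet> \<alpha> = 2 \<Longrightarrow> gaussian a (refl \<alpha> x) = gaussian a x"
  by (simp add: gaussian_def norm_refl)

lemma continuous_on_gaussian: "continuous_on UNIV (gaussian a)"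
  unfolding gaussian_def by (intro continuous_intros)

lemma gaussian_has_derivative:
  "(gaussian a has_derivative (\<lambda>h. complex_of_real (2 * a * (x \<bullet> h)) * gaussian a x)) (at x)"
proof -
  have "((\<lambda>x. complex_of_real (a * (x \<bullet> x))) has_derivative
      (\<lambda>h. complex_of_real (a * (x \<bullet> h + h \<bullet> x)))) (at x)"
    by (intro has_derivative_of_real has_derivative_mult_right has_derivative_inner has_derivative_ident)
  moreover have "(exp has_derivative (\<lambda>h. exp (complex_of_real (a * (x \<bullet> x))) * h))
      (at (complex_of_real (a * (x \<bullet> x))))"
    using DERIV_exp has_field_derivative_def by blast
  ultimately have "((\<lambda>x. exp (complex_of_real (a * (x \<bullet> x)))) has_derivative
      (\<lambda>h. exp (complex_of_real (a * (x \<bullet> x))) * complex_of_real (a * (x \<bullet> h + h \<bullet> x)))) (at x)"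
    by (rule has_derivative_compose)
  then show ?thesis
    unfolding gaussian_def power2_norm_eq_inner
    by (rule has_derivative_eq_rhs) (auto simp: fun_eq_iff inner_commute algebra_simps)
qed

lemma gaussian_differentiable: "gaussian a differentiable (at x)"
  using gaussian_has_derivative differentiable_def by blast

lemma partial_gaussian: "partial i (gaussian a) x = complex_of_real (2 * a * x$i) * gaussian a x"
  using partial_eq_derivative[OF gaussian_has_derivative] by (simp add: inner_axis)

lemma diff_quot_gaussian_mult:
  assumes "\<alpha> \<bullet> \<alpha> = 2" "continuous_on UNIV (diff_quot \<alpha> P)"
  shows "diff_quot \<alpha> (\<lambda>x. gaussian a x * P x) = (\<lambda>x. gaussian a x * diff_quot \<alpha> P x)"
  using assms
  by (intro diff_quot_eqI continuous_on_mult continuous_on_gaussian)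
    (auto simp: gaussian_refl diff_quot_off_hyperplane simp flip: right_diff_distrib)

section \<open>Clifford algebra\<close>

lemma cl_mult_sum_left:
  "cl_mult (\<lambda>A. \<Sum>i\<in>I. c i * a i A) b C = (\<Sum>i\<in>I. c i * cl_mult (a i) b C)"
proof -
  have "cl_mult (\<lambda>A. \<Sum>i\<in>I. c i * a i A) b C =
      (\<Sum>A\<in>UNIV. \<Sum>B\<in>UNIV. \<Sum>i\<in>I. c i * (if (A - B) \<union> (B - A) = C then cl_sign A B * a i A * b B else 0))"
    unfolding cl_mult_def by (intro sum.cong refl) (simp add: sum_distrib_left sum_distrib_right mult_ac)
  also have "\<dots> = (\<Sum>i\<in>I. \<Sum>A\<in>UNIV. \<Sum>B\<in>UNIV. c i * (if (A - B) \<union> (B - A) = C then cl_sign A B * a i A * b B else 0))"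
    by (simp only: sum.swap[of _ I])
  finally show ?thesis unfolding cl_mult_def by (simp add: sum_distrib_left)
qed

lemma cl_mult_sum_right:
  "cl_mult a (\<lambda>B. \<Sum>i\<in>I. c i * b i B) C = (\<Sum>i\<in>I. c i * cl_mult a (b i) C)"
proof -
  have "cl_mult a (\<lambda>B. \<Sum>i\<in>I. c i * b i B) C =
      (\<Sum>A\<in>UNIV. \<Sum>B\<in>UNIV. \<Sum>i\<in>I. c i * (if (A - B) \<union> (B - A) = C then cl_sign A B * a A * b i B else 0))"
    unfolding cl_mult_def by (intro sum.cong refl) (simp add: sum_distrib_left sum_distrib_right mult_ac)
  also have "\<dots> = (\<Sum>i\<in>I. \<Sum>A\<in>UNIV. \<Sum>B\<in>UNIV. c i * (if (A - B) \<union> (B - A) = C then cl_sign A B * a A * b i B else 0))"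
    by (simp only: sum.swap[of _ I])
  finally show ?thesis unfolding cl_mult_def by (simp add: sum_distrib_left)
qed

lemma cl_mult_vec_left: "cl_mult (cl_vec x) b C = (\<Sum>i\<in>UNIV. complex_of_real (x$i) * cl_mult (cl_e i) b C)"
  unfolding cl_vec_def by (rule cl_mult_sum_left)

lemma cl_mult_e_left:
  "cl_mult (cl_e j) b C = (\<Sum>B\<in>UNIV. if ({j} - B) \<union> (B - {j}) = C then cl_sign {j} B * b B else 0)"
proof -
  have "cl_mult (cl_e j) b C = (\<Sum>A\<in>UNIV. if A = {j}
      then (\<Sum>B\<in>UNIV. if (A - B) \<union> (B - A) = C then cl_sign A B * b B else 0) else 0)"
    unfolding cl_mult_def by (intro sum.cong refl) (simp add: cl_e_def cong: if_cong)
  then show ?thesis by simp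
qed

lemma cl_mult_e_scalar:
  fixes j :: "'n::{finite,linorder}"
  shows "cl_mult (cl_e j) (cl_scalar z) = (\<lambda>C. z * cl_e j C)"
proof
  fix C
  have "cl_mult (cl_e j) (cl_scalar z) C
      = (\<Sum>B\<in>(UNIV :: 'n set set). if B = {} then (if {j} = C then cl_sign {j} {} * z else 0) else 0)"
    unfolding cl_mult_e_left by (intro sum.cong refl) (auto simp: cl_scalar_def)
  then show "cl_mult (cl_e j) (cl_scalar z) C = z * cl_e j C"
    by (auto simp: cl_sign_def cl_e_def)
qed

lemma cl_mult_e_e:
  "cl_mult (cl_e j) (cl_e i) C = (if ({j} - {i}) \<union> ({i} - {j}) = C then cl_sign {j} {i} else 0)"
proof -
  have "cl_mult (cl_e j) (cl_e i) C = (\<Sum>B\<in>UNIV. if B = {i}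
      then (if ({j} - {i}) \<union> ({i} - {j}) = C then cl_sign {j} {i} else 0) else 0)"
    unfolding cl_mult_e_left by (intro sum.cong refl) (auto simp: cl_e_def)
  then show ?thesis by simp
qed

lemma cl_sign_singletons: "cl_sign {j} {i} = (if i < j \<or> i = j then -1 else 1)"
proof -
  have "{(a, b). a \<in> {j} \<and> b \<in> {i} \<and> b < a} = (if i < j then {(j, i)} else {})" by auto
  then show ?thesis by (auto simp: cl_sign_def)
qed

lemma cl_e_anticommute:
  "cl_mult (cl_e j) (cl_e i) C + cl_mult (cl_e i) (cl_e j) C = (if i = j then cl_scalar (-2) C else 0)"
proof -
  have "({j} - {i}) \<union> ({i} - {j}) = ({i} - {j}) \<union> ({j} - {i})" by auto
  then show ?thesis
    by (cases i j rule: linorder_cases) (auto simp: cl_mult_e_e cl_sign_singletons cl_scalar_def)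
qed

lemma sum_symmetric_cl_e_e:
  assumes sym: "\<And>i j. M j i = M i j"
  shows "(\<Sum>j\<in>UNIV. \<Sum>i\<in>UNIV. M j i * cl_mult (cl_e j) (cl_e i) C) = cl_scalar (- (\<Sum>j\<in>UNIV. M j j)) C"
proof -
  let ?S = "\<Sum>j\<in>UNIV. \<Sum>i\<in>UNIV. M j i * cl_mult (cl_e j) (cl_e i) C"
  have "?S = (\<Sum>j\<in>UNIV. \<Sum>i\<in>UNIV. M j i * cl_mult (cl_e i) (cl_e j) C)"
    using sym by (subst sum.swap) simp
  then have "2 * ?S = (\<Sum>j\<in>UNIV. \<Sum>i\<in>UNIV. M j i * (if i = j then cl_scalar (-2) C else 0))"
    by (simp add: algebra_simps sum.distrib flip: cl_e_anticommute)
  also have "\<dots> = 2 * cl_scalar (- (\<Sum>j\<in>UNIV. M j j)) C"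
    by (simp add: if_distrib cong: if_cong) (simp add: cl_scalar_def sum_negf flip: sum_distrib_right)
  finally show ?thesis by simp
qed

section \<open>Dunkl operators on polynomials\<close>

locale dunkl_system =
  fixes R Rp :: "(real^'n::finite) set" and \<kappa> :: "real^'n \<Rightarrow> complex"
  assumes root_system: "root_system R"
    and positive_subsystem: "positive_subsystem R Rp"
    and G_invariant: "G_invariant R \<kappa>"
begin

lemma root_norm: "\<alpha> \<in> R \<Longrightarrow> \<alpha> \<bullet> \<alpha> = 2"
  using root_system by (simp add: root_system_def)

lemma refl_root_in_roots: "\<alpha> \<in> R \<Longrightarrow> \<beta> \<in> R \<Longrightarrow> refl \<alpha> \<beta> \<in> R"
  using root_system by (simp add: root_system_def)

lemma uminus_root_in_roots: "\<alpha> \<in> R \<Longrightarrow> - \<alpha> \<in> R"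
  using refl_root_in_roots[of \<alpha> \<alpha>] refl_root[OF root_norm] by simp

lemma pos_roots_subset: "Rp \<subseteq> R"
  using positive_subsystem by (auto simp: positive_subsystem_def)

lemma finite_pos_roots: "finite Rp"
  using pos_roots_subset root_system finite_subset by (auto simp: root_system_def)

lemma pos_root_norm: "\<alpha> \<in> Rp \<Longrightarrow> \<alpha> \<bullet> \<alpha> = 2"
  using pos_roots_subset root_norm by blast

lemma roots_split: "R = Rp \<union> uminus ` Rp" "Rp \<inter> uminus ` Rp = {}"
proof -
  obtain \<beta> where \<beta>: "\<forall>\<alpha>\<in>R. \<alpha> \<bullet> \<beta> \<noteq> 0" "Rp = {\<alpha>\<in>R. \<alpha> \<bullet> \<beta> > 0}"
    using positive_subsystem by (auto simp: positive_subsystem_def)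
  have "\<gamma> \<in> Rp \<union> uminus ` Rp" if "\<gamma> \<in> R" for \<gamma>
  proof (cases "\<gamma> \<bullet> \<beta> > 0")
    case False
    then have "- \<gamma> \<in> Rp" using \<beta> that uminus_root_in_roots by force
    then show ?thesis by (auto intro: image_eqI[where x = "- \<gamma>"])
  qed (use \<beta> that in auto)
  then show "R = Rp \<union> uminus ` Rp"
    using pos_roots_subset uminus_root_in_roots by auto
  show "Rp \<inter> uminus ` Rp = {}" using \<beta> by auto
qed

lemma sum_roots_even:
  fixes \<phi> :: "real^'n \<Rightarrow> 'a::comm_semiring_1"
  assumes "\<And>\<gamma>. \<gamma> \<in> R \<Longrightarrow> \<phi> (- \<gamma>) = \<phi> \<gamma>"
  shows "(\<Sum>\<gamma>\<in>R. \<phi> \<gamma>) = 2 * (\<Sum>\<alpha>\<in>Rp. \<phi> \<alpha>)"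
proof -
  have "(\<Sum>\<gamma>\<in>R. \<phi> \<gamma>) = (\<Sum>\<gamma>\<in>Rp. \<phi> \<gamma>) + (\<Sum>\<gamma>\<in>uminus ` Rp. \<phi> \<gamma>)"
    by (subst roots_split(1), rule sum.union_disjoint) (auto simp: finite_pos_roots roots_split(2))
  also have "(\<Sum>\<gamma>\<in>uminus ` Rp. \<phi> \<gamma>) = (\<Sum>\<gamma>\<in>Rp. \<phi> (- \<gamma>))"
    by (subst sum.reindex) (auto simp: inj_on_def)
  also have "\<dots> = (\<Sum>\<gamma>\<in>Rp. \<phi> \<gamma>)"
    using assms pos_roots_subset by (intro sum.cong) auto
  finally show ?thesis by (simp add: mult_2)
qed

lemma sum_roots_refl:
  assumes "\<beta> \<in> R"
  shows "(\<Sum>\<gamma>\<in>R. \<phi> (refl \<beta> \<gamma>)) = (\<Sum>\<gamma>\<in>R. \<phi> \<gamma>)"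
  using assms refl_root_in_roots refl_refl[OF root_norm[OF assms]]
  by (intro sum.reindex_bij_witness[of _ "refl \<beta>" "refl \<beta>"]) auto

text \<open>Since \<open>R\<^sub>+\<close> meets each pair \<open>\<plusminus>\<gamma>\<close> once, a sum over \<open>R\<^sub>+\<close> of an even function is half
  the sum over the \<open>G\<close>-stable set \<open>R\<close>.\<close>
lemma sum_pos_roots_refl:
  fixes \<phi> :: "real^'n \<Rightarrow> complex"
  assumes "\<beta> \<in> R" and even: "\<And>\<gamma>. \<gamma> \<in> R \<Longrightarrow> \<phi> (- \<gamma>) = \<phi> \<gamma>"
  shows "(\<Sum>\<alpha>\<in>Rp. \<phi> (refl \<beta> \<alpha>)) = (\<Sum>\<alpha>\<in>Rp. \<phi> \<alpha>)"
proof -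
  have "2 * (\<Sum>\<alpha>\<in>Rp. \<phi> (refl \<beta> \<alpha>)) = (\<Sum>\<gamma>\<in>R. \<phi> (refl \<beta> \<gamma>))"
    using even refl_root_in_roots[OF assms(1)] by (subst sum_roots_even) (auto simp: refl_uminus)
  also have "\<dots> = (\<Sum>\<gamma>\<in>R. \<phi> \<gamma>)"
    by (rule sum_roots_refl[OF assms(1)])
  also have "\<dots> = 2 * (\<Sum>\<alpha>\<in>Rp. \<phi> \<alpha>)"
    using even by (rule sum_roots_even)
  finally show ?thesis by simp
qed

lemma kappa_refl: "\<beta> \<in> R \<Longrightarrow> \<alpha> \<in> R \<Longrightarrow> \<kappa> (refl \<beta> \<alpha>) = \<kappa> \<alpha>"
  using G_invariant refl_group.step[OF refl_group.id_in, of \<beta> R] by (auto simp: G_invariant_def)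

lemma kappa_uminus: "\<alpha> \<in> R \<Longrightarrow> \<kappa> (- \<alpha>) = \<kappa> \<alpha>"
  using kappa_refl[of \<alpha> \<alpha>] refl_root[OF root_norm] by simp

abbreviation T where "T \<equiv> dunkl Rp \<kappa>"

lemma dunkl_eq:
  "T i f x = partial i f x + (\<Sum>\<alpha>\<in>Rp. \<kappa> \<alpha> * complex_of_real (\<alpha> $ i) * diff_quot \<alpha> f x)"
  by (simp add: dunkl_def)

lemma poly_fun_dunkl: "poly_fun f \<Longrightarrow> poly_fun (T i f)"
  unfolding dunkl_def
  by (intro poly_fun_add poly_fun_partial poly_fun_sum poly_fun_scale poly_fun_diff_quot pos_root_norm)

lemma dunkl_add:
  assumes f: "poly_fun f" and g: "poly_fun g"
  shows "T i (\<lambda>x. f x + g x) = (\<lambda>x. T i f x + T i g x)"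
proof
  fix x
  have "diff_quot \<alpha> (\<lambda>x. f x + g x) x = diff_quot \<alpha> f x + diff_quot \<alpha> g x" if "\<alpha> \<in> Rp" for \<alpha>
    using that f g by (simp add: diff_quot_add continuous_on_diff_quot pos_root_norm)
  then show "T i (\<lambda>x. f x + g x) x = T i f x + T i g x"
    using f g by (simp add: dunkl_eq partial_add poly_fun_differentiable sum.distrib algebra_simps
        cong: sum.cong)
qed

lemma dunkl_scale:
  assumes f: "poly_fun f"
  shows "T i (\<lambda>x. c * f x) = (\<lambda>x. c * T i f x)"
proof
  fix x
  have "diff_quot \<alpha> (\<lambda>x. c * f x) x = c * diff_quot \<alpha> f x" if "\<alpha> \<in> Rp" for \<alpha>
    using that f by (simp add: diff_quot_scale continuous_on_diff_quot pos_root_norm)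
  moreover have "partial i (\<lambda>x. c * f x) x = c * partial i f x"
    using partial_mult[OF differentiable_const poly_fun_differentiable[OF f]] by (simp add: partial_const)
  ultimately show "T i (\<lambda>x. c * f x) x = c * T i f x"
    by (simp add: dunkl_eq sum_distrib_left algebra_simps cong: sum.cong)
qed

lemma dunkl_const: "T i (\<lambda>x. c) = (\<lambda>x. 0)"
  by (simp add: fun_eq_iff dunkl_eq partial_const diff_quot_const pos_root_norm cong: sum.cong)

lemma dunkl_sum:
  "finite I \<Longrightarrow> (\<And>a. a \<in> I \<Longrightarrow> poly_fun (F a)) \<Longrightarrow> T i (\<lambda>x. \<Sum>a\<in>I. F a x) = (\<lambda>x. \<Sum>a\<in>I. T i (F a) x)"
proof (induction I rule: finite_induct)
  case empty
  then show ?case using dunkl_const[of i 0] by simp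
next
  case (insert a A)
  then show ?case by (simp add: dunkl_add poly_fun_sum)
qed

lemma dunkl_coord_mult:
  assumes f: "poly_fun f"
  shows "T i (\<lambda>x. complex_of_real (x$l) * f x) x = complex_of_real (x$l) * T i f x
    + (if i = l then f x else 0) + (\<Sum>\<alpha>\<in>Rp. \<kappa> \<alpha> * complex_of_real (\<alpha>$i * \<alpha>$l) * f (refl \<alpha> x))"
proof -
  have "diff_quot \<alpha> (\<lambda>x. complex_of_real (x$l) * f x) x
      = complex_of_real (x$l) * diff_quot \<alpha> f x + complex_of_real (\<alpha>$l) * f (refl \<alpha> x)"
    if "\<alpha> \<in> Rp" for \<alpha>
    using that f
    by (simp add: diff_quot_coord_mult continuous_on_diff_quot poly_fun_continuous_on pos_root_norm)
  then have "(\<Sum>\<alpha>\<in>Rp. \<kappa> \<alpha> * complex_of_real (\<alpha> $ i) * diff_quot \<alpha> (\<lambda>x. complex_of_real (x$l) * f x) x)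
      = complex_of_real (x$l) * (\<Sum>\<alpha>\<in>Rp. \<kappa> \<alpha> * complex_of_real (\<alpha> $ i) * diff_quot \<alpha> f x)
        + (\<Sum>\<alpha>\<in>Rp. \<kappa> \<alpha> * complex_of_real (\<alpha>$i * \<alpha>$l) * f (refl \<alpha> x))"
    by (simp add: sum.distrib sum_distrib_left algebra_simps cong: sum.cong)
  then show ?thesis
    unfolding dunkl_eq partial_coord_mult[OF poly_fun_differentiable[OF f]] by (simp add: algebra_simps)
qed

lemma dunkl_gaussian_mult:
  assumes P: "poly_fun P"
  shows "T i (\<lambda>x. gaussian a x * P x) x = gaussian a x * (T i P x + complex_of_real (2 * a * x$i) * P x)"
proof -
  have "partial i (\<lambda>x. gaussian a x * P x) x
      = complex_of_real (2 * a * x$i) * gaussian a x * P x + gaussian a x * partial i P x"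
    using partial_mult[OF gaussian_differentiable poly_fun_differentiable[OF P]]
    by (simp add: partial_gaussian)
  moreover have "diff_quot \<alpha> (\<lambda>x. gaussian a x * P x) x = gaussian a x * diff_quot \<alpha> P x"
    if "\<alpha> \<in> Rp" for \<alpha>
    using that P by (simp add: diff_quot_gaussian_mult continuous_on_diff_quot pos_root_norm)
  ultimately show ?thesis
    by (simp add: dunkl_eq algebra_simps sum_distrib_left cong: sum.cong)
qed

lemma sum_coord_mult_dunkl:
  "(\<Sum>i\<in>UNIV. complex_of_real (x$i) * T i P x) = euler_op P x + (\<Sum>\<alpha>\<in>Rp. \<kappa> \<alpha> * (P x - P (refl \<alpha> x)))"
proof -
  have "(\<Sum>i\<in>UNIV. complex_of_real (x$i) * T i P x)
      = euler_op P x + (\<Sum>i\<in>UNIV. \<Sum>\<alpha>\<in>Rp. \<kappa> \<alpha> * (complex_of_real (x$i * \<alpha> $ i) * diff_quot \<alpha> P x))"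
    by (simp add: dunkl_eq euler_op_def algebra_simps sum.distrib sum_distrib_left)
  also have "(\<Sum>i\<in>UNIV. \<Sum>\<alpha>\<in>Rp. \<kappa> \<alpha> * (complex_of_real (x$i * \<alpha> $ i) * diff_quot \<alpha> P x))
      = (\<Sum>\<alpha>\<in>Rp. \<kappa> \<alpha> * (complex_of_real (\<alpha> \<bullet> x) * diff_quot \<alpha> P x))"
    by (subst sum.swap) (simp add: inner_vec_def of_real_sum sum_distrib_left mult_ac)
  finally show ?thesis
    by (simp add: inner_mult_diff_quot pos_root_norm cong: sum.cong)
qed

lemma sum_diff_quot_compose_refl:
  fixes x :: "real^'n"
  assumes b: "\<beta> \<in> R" and f: "poly_fun f"
  defines "y \<equiv> refl \<beta> x"
  shows "(\<Sum>\<alpha>\<in>Rp. \<kappa> \<alpha> * complex_of_real (\<alpha>$j) * diff_quot \<alpha> (\<lambda>x. f (refl \<beta> x)) x)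
    = (\<Sum>\<alpha>\<in>Rp. \<kappa> \<alpha> * complex_of_real (\<alpha>$j) * diff_quot \<alpha> f y)
      - complex_of_real (\<beta>$j) * (\<Sum>k\<in>UNIV. complex_of_real (\<beta>$k) *
          (\<Sum>\<alpha>\<in>Rp. \<kappa> \<alpha> * complex_of_real (\<alpha>$k) * diff_quot \<alpha> f y))"
proof -
  have b2: "\<beta> \<bullet> \<beta> = 2" using root_norm[OF b] .
  define u where "u = refl \<beta> (axis j 1)"
  define \<phi> where "\<phi> \<gamma> = \<kappa> \<gamma> * complex_of_real (\<gamma> \<bullet> u) * diff_quot \<gamma> f y" for \<gamma>
  have "(\<Sum>\<alpha>\<in>Rp. \<kappa> \<alpha> * complex_of_real (\<alpha>$j) * diff_quot \<alpha> (\<lambda>x. f (refl \<beta> x)) x)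
      = (\<Sum>\<alpha>\<in>Rp. \<phi> (refl \<beta> \<alpha>))"
  proof (intro sum.cong refl)
    fix \<alpha>
    assume "\<alpha> \<in> Rp"
    then have a: "\<alpha> \<in> R" using pos_roots_subset by auto
    have "refl \<beta> \<alpha> \<bullet> u = \<alpha> $ j" unfolding u_def inner_refl_refl[OF b2] by (simp add: inner_axis)
    then show "\<kappa> \<alpha> * complex_of_real (\<alpha>$j) * diff_quot \<alpha> (\<lambda>x. f (refl \<beta> x)) x = \<phi> (refl \<beta> \<alpha>)"
      by (simp add: \<phi>_def kappa_refl[OF b a] diff_quot_compose_refl[OF b2 root_norm[OF a] f] y_def)
  qed
  also have "\<dots> = (\<Sum>\<alpha>\<in>Rp. \<phi> \<alpha>)"
    using b f by (intro sum_pos_roots_refl) (simp_all add: \<phi>_def kappa_uminus diff_quot_uminus_root root_norm)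
  also have "\<dots> = (\<Sum>\<alpha>\<in>Rp. \<kappa> \<alpha> * complex_of_real (\<alpha>$j) * diff_quot \<alpha> f y
      - complex_of_real (\<beta>$j) * (\<kappa> \<alpha> * complex_of_real (\<alpha> \<bullet> \<beta>) * diff_quot \<alpha> f y))"
    by (simp add: \<phi>_def u_def refl_eq[OF b2] inner_diff_right inner_axis inner_commute algebra_simps)
  moreover have "(\<Sum>k\<in>UNIV. complex_of_real (\<beta>$k) * (\<Sum>\<alpha>\<in>Rp. \<kappa> \<alpha> * complex_of_real (\<alpha>$k) * diff_quot \<alpha> f y))
      = (\<Sum>\<alpha>\<in>Rp. \<kappa> \<alpha> * complex_of_real (\<alpha> \<bullet> \<beta>) * diff_quot \<alpha> f y)"
    unfolding sum_distrib_left
    by (subst sum.swap) (simp add: inner_vec_def of_real_sum sum_distrib_left sum_distrib_right mult_ac)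
  ultimately show ?thesis by (simp add: sum_subtractf sum_distrib_left)
qed

text \<open>In invariant form: \<open>T\<^sub>\<xi>(f \<circ> r\<^sub>\<beta>) = (T\<^bsub>r\<^sub>\<beta> \<xi>\<^esub> f) \<circ> r\<^sub>\<beta>\<close> with \<open>\<xi> = e\<^sub>j\<close>.\<close>
lemma dunkl_compose_refl:
  assumes b: "\<beta> \<in> R" and f: "poly_fun f"
  shows "T j (\<lambda>x. f (refl \<beta> x)) x = T j f (refl \<beta> x)
    - complex_of_real (\<beta>$j) * (\<Sum>k\<in>UNIV. complex_of_real (\<beta>$k) * T k f (refl \<beta> x))"
  unfolding dunkl_eq[of j "\<lambda>x. f (refl \<beta> x)"] sum_diff_quot_compose_refl[OF b f]
    partial_compose_refl[OF root_norm[OF b] poly_fun_differentiable[OF f]]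
  by (simp add: dunkl_eq algebra_simps sum.distrib)

lemma dunkl_sum_compose_refl:
  assumes f: "poly_fun f"
  shows "T i (\<lambda>x. \<Sum>\<alpha>\<in>Rp. c \<alpha> * f (refl \<alpha> x)) x = (\<Sum>\<alpha>\<in>Rp. c \<alpha> *
      (T i f (refl \<alpha> x) - complex_of_real (\<alpha>$i) * (\<Sum>k\<in>UNIV. complex_of_real (\<alpha>$k) * T k f (refl \<alpha> x))))"
proof -
  have "poly_fun (\<lambda>x. f (refl \<alpha> x))" if "\<alpha> \<in> Rp" for \<alpha>
    using f that by (simp add: poly_fun_compose_refl pos_root_norm)
  then show ?thesis
    using f pos_roots_subset
    by (auto simp: dunkl_sum finite_pos_roots poly_fun_scale dunkl_scale dunkl_compose_refl
        intro!: sum.cong)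
qed

lemma dunkl_dunkl_coord_mult:
  assumes f: "poly_fun f"
  shows "T i (T j (\<lambda>x. complex_of_real (x$l) * f x)) x =
      complex_of_real (x$l) * T i (T j f) x + (if i = l then T j f x else 0) + (if j = l then T i f x else 0)
    + (\<Sum>\<alpha>\<in>Rp. \<kappa> \<alpha> * complex_of_real (\<alpha>$i * \<alpha>$l) * T j f (refl \<alpha> x))
    + (\<Sum>\<alpha>\<in>Rp. \<kappa> \<alpha> * complex_of_real (\<alpha>$j * \<alpha>$l) * T i f (refl \<alpha> x))
    - (\<Sum>\<alpha>\<in>Rp. \<kappa> \<alpha> * complex_of_real (\<alpha>$i * \<alpha>$j * \<alpha>$l) *
        (\<Sum>k\<in>UNIV. complex_of_real (\<alpha>$k) * T k f (refl \<alpha> x)))"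
proof -
  define A1 where "A1 x = complex_of_real (x$l) * T j f x" for x
  define A2 where "A2 x = (if j = l then f x else 0)" for x
  define A3 where "A3 x = (\<Sum>\<alpha>\<in>Rp. \<kappa> \<alpha> * complex_of_real (\<alpha>$j * \<alpha>$l) * f (refl \<alpha> x))" for x
  have p1: "poly_fun A1" unfolding A1_def by (intro poly_fun_coord_mult poly_fun_dunkl f)
  have p2: "poly_fun A2" unfolding A2_def using f poly_fun_const[of 0] by (cases "j = l") auto
  have p3: "poly_fun A3"
    unfolding A3_def by (intro poly_fun_sum poly_fun_scale poly_fun_compose_refl f pos_root_norm)
  have "T j (\<lambda>x. complex_of_real (x$l) * f x) = (\<lambda>x. A1 x + (A2 x + A3 x))"
    by (simp add: fun_eq_iff dunkl_coord_mult[OF f] A1_def A2_def A3_def)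
  then have "T i (T j (\<lambda>x. complex_of_real (x$l) * f x)) x = T i A1 x + T i A2 x + T i A3 x"
    using p1 p2 p3 by (simp add: dunkl_add poly_fun_add)
  moreover have "T i A1 x = complex_of_real (x$l) * T i (T j f) x + (if i = l then T j f x else 0)
      + (\<Sum>\<alpha>\<in>Rp. \<kappa> \<alpha> * complex_of_real (\<alpha>$i * \<alpha>$l) * T j f (refl \<alpha> x))"
    unfolding A1_def by (rule dunkl_coord_mult[OF poly_fun_dunkl[OF f]])
  moreover have "T i A2 x = (if j = l then T i f x else 0)"
    unfolding A2_def by (cases "j = l") (simp_all add: dunkl_const)
  moreover have "T i A3 x = (\<Sum>\<alpha>\<in>Rp. \<kappa> \<alpha> * complex_of_real (\<alpha>$j * \<alpha>$l) * T i f (refl \<alpha> x))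
      - (\<Sum>\<alpha>\<in>Rp. \<kappa> \<alpha> * complex_of_real (\<alpha>$i * \<alpha>$j * \<alpha>$l) *
          (\<Sum>k\<in>UNIV. complex_of_real (\<alpha>$k) * T k f (refl \<alpha> x)))"
    unfolding A3_def dunkl_sum_compose_refl[OF f] by (simp add: algebra_simps flip: sum_subtractf)
  ultimately show ?thesis by (simp add: algebra_simps)
qed

lemma dunkl_commute: "poly_fun f \<Longrightarrow> T i (T j f) = T j (T i f)"
proof (induction rule: poly_fun.induct)
  case (poly_fun_const c)
  then show ?case by (simp add: dunkl_const)
next
  case (poly_fun_coord_mult f l)
  show ?case
  proof
    fix x
    show "T i (T j (\<lambda>x. complex_of_real (x$l) * f x)) x = T j (T i (\<lambda>x. complex_of_real (x$l) * f x)) x"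
      unfolding dunkl_dunkl_coord_mult[OF poly_fun_coord_mult.hyps] poly_fun_coord_mult.IH
      by (simp add: algebra_simps)
  qed
next
  case (poly_fun_add f g)
  then show ?case by (simp add: dunkl_add poly_fun_dunkl)
qed

text \<open>\<open>conj_dunkl a i\<close> is \<open>T\<^sub>i\<close> conjugated by the Gaussian \<open>e\<^bsup>a|x|\<^sup>2\<^esup>\<close> (see
  \<open>dunkl_gaussian_mult\<close>); for \<open>a = -1\<close> it is \<open>T\<^sub>i - 2x\<^sub>i\<close>, the \<open>i\<close>-th component of \<open>-D\<^sub>+\<close>.\<close>
definition conj_dunkl :: "real \<Rightarrow> 'n \<Rightarrow> (real^'n \<Rightarrow> complex) \<Rightarrow> real^'n \<Rightarrow> complex" where
  "conj_dunkl a i P x = T i P x + complex_of_real (2 * a) * (complex_of_real (x$i) * P x)"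

lemma poly_fun_conj_dunkl: "poly_fun P \<Longrightarrow> poly_fun (conj_dunkl a i P)"
  unfolding conj_dunkl_def[abs_def] by (intro poly_fun_add poly_fun_dunkl poly_fun_scale poly_fun_coord_mult)

lemma dunkl_conj_dunkl:
  assumes P: "poly_fun P"
  shows "T j (conj_dunkl a i P) x = T j (T i P) x + complex_of_real (2 * a) *
    (complex_of_real (x$i) * T j P x + (if j = i then P x else 0)
      + (\<Sum>\<alpha>\<in>Rp. \<kappa> \<alpha> * complex_of_real (\<alpha>$j * \<alpha>$i) * P (refl \<alpha> x)))"
proof -
  have "conj_dunkl a i P = (\<lambda>x. T i P x + complex_of_real (2 * a) * (complex_of_real (x$i) * P x))"
    by (simp add: fun_eq_iff conj_dunkl_def)
  then show ?thesis
    using P by (simp add: dunkl_add dunkl_scale dunkl_coord_mult poly_fun_dunkl poly_fun_scale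
        poly_fun_coord_mult)
qed

lemma conj_dunkl_commute:
  assumes P: "poly_fun P"
  shows "conj_dunkl a j (conj_dunkl a i P) x = conj_dunkl a i (conj_dunkl a j P) x"
proof -
  have "(\<Sum>\<alpha>\<in>Rp. \<kappa> \<alpha> * complex_of_real (\<alpha>$j * \<alpha>$i) * P (refl \<alpha> x))
      = (\<Sum>\<alpha>\<in>Rp. \<kappa> \<alpha> * complex_of_real (\<alpha>$i * \<alpha>$j) * P (refl \<alpha> x))"
    by (simp add: mult.commute)
  then show ?thesis
    unfolding conj_dunkl_def[of a j "conj_dunkl a i P"] conj_dunkl_def[of a i "conj_dunkl a j P"]
      dunkl_conj_dunkl[OF P] dunkl_commute[OF P, of j i]
    by (simp add: conj_dunkl_def algebra_simps)
qed

lemma conj_dunkl_uminus: "poly_fun f \<Longrightarrow> conj_dunkl a j (\<lambda>y. - f y) x = - conj_dunkl a j f x"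
  using dunkl_scale[of f j "-1"] by (simp add: conj_dunkl_def)

lemma sum_conj_dunkl_square:
  assumes P: "poly_fun P"
  shows "(\<Sum>i\<in>UNIV. conj_dunkl a i (conj_dunkl a i P) x) = dunkl_laplacian Rp \<kappa> P x
    + complex_of_real (2 * a) * (2 * euler_op P x + dunkl_dim Rp \<kappa> * P x)
    + complex_of_real (4 * a^2 * norm x ^ 2) * P x"
proof -
  define c where "c = complex_of_real (2 * a)"
  define Y where "Y = (\<Sum>\<alpha>\<in>Rp. \<kappa> \<alpha> * P (refl \<alpha> x))"
  have each: "conj_dunkl a i (conj_dunkl a i P) x = T i (T i P) x + c * P x
      + c * (\<Sum>\<alpha>\<in>Rp. \<kappa> \<alpha> * complex_of_real (\<alpha>$i * \<alpha>$i) * P (refl \<alpha> x))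
      + 2 * c * (complex_of_real (x$i) * T i P x) + c * c * (complex_of_real (x$i * x$i) * P x)" for i
    unfolding conj_dunkl_def[of a i "conj_dunkl a i P"] dunkl_conj_dunkl[OF P]
    by (simp add: conj_dunkl_def c_def algebra_simps)
  have "(\<Sum>i\<in>UNIV. \<Sum>\<alpha>\<in>Rp. \<kappa> \<alpha> * complex_of_real (\<alpha>$i * \<alpha>$i) * P (refl \<alpha> x))
      = (\<Sum>\<alpha>\<in>Rp. \<kappa> \<alpha> * complex_of_real (\<alpha> \<bullet> \<alpha>) * P (refl \<alpha> x))"
    by (subst sum.swap) (simp add: inner_vec_def of_real_sum sum_distrib_left sum_distrib_right mult_ac)
  also have "\<dots> = 2 * Y" by (simp add: Y_def pos_root_norm sum_distrib_left mult_ac)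
  finally have reflections: "(\<Sum>i\<in>UNIV. \<Sum>\<alpha>\<in>Rp. \<kappa> \<alpha> * complex_of_real (\<alpha>$i * \<alpha>$i) * P (refl \<alpha> x)) = 2 * Y" .
  have euler: "(\<Sum>i\<in>UNIV. complex_of_real (x$i) * T i P x) = euler_op P x + dunkl_gamma Rp \<kappa> * P x - Y"
    by (simp add: sum_coord_mult_dunkl Y_def dunkl_gamma_def algebra_simps sum_subtractf sum_distrib_left)
  have norm: "(\<Sum>i\<in>UNIV. complex_of_real (x$i * x$i)) = complex_of_real (norm x ^ 2)"
    by (simp add: power2_norm_eq_inner inner_vec_def of_real_sum)
  have "(\<Sum>i\<in>UNIV. conj_dunkl a i (conj_dunkl a i P) x) = dunkl_laplacian Rp \<kappa> P x
      + c * of_nat CARD('n) * P x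
      + c * (\<Sum>i\<in>UNIV. \<Sum>\<alpha>\<in>Rp. \<kappa> \<alpha> * complex_of_real (\<alpha>$i * \<alpha>$i) * P (refl \<alpha> x))
      + 2 * c * (\<Sum>i\<in>UNIV. complex_of_real (x$i) * T i P x)
      + c * c * (\<Sum>i\<in>UNIV. complex_of_real (x$i * x$i)) * P x"
    unfolding each by (simp add: sum.distrib dunkl_laplacian_def sum_distrib_left sum_distrib_right mult_ac)
  then show ?thesis
    unfolding reflections euler norm by (simp add: c_def dunkl_dim_def power2_eq_square algebra_simps)
qed

lemma dunkl_laplacian_gaussian_mult:
  assumes P: "poly_fun P"
  shows "dunkl_laplacian Rp \<kappa> (\<lambda>x. gaussian a x * P x) x
    = gaussian a x * (\<Sum>i\<in>UNIV. conj_dunkl a i (conj_dunkl a i P) x)"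
proof -
  have conj: "T i (\<lambda>x. gaussian a x * Q x) = (\<lambda>x. gaussian a x * conj_dunkl a i Q x)"
    if "poly_fun Q" for Q i
  proof
    fix x
    show "T i (\<lambda>x. gaussian a x * Q x) x = gaussian a x * conj_dunkl a i Q x"
      unfolding dunkl_gaussian_mult[OF that] conj_dunkl_def by (simp add: algebra_simps)
  qed
  show ?thesis
    using P by (simp add: dunkl_laplacian_def conj poly_fun_conj_dunkl sum_distrib_left)
qed

lemma euler_op_gaussian_mult:
  assumes P: "poly_fun P"
  shows "euler_op (\<lambda>x. gaussian a x * P x) x
    = gaussian a x * (euler_op P x + complex_of_real (2 * a * norm x ^ 2) * P x)"
proof -
  have "partial i (\<lambda>x. gaussian a x * P x) x
      = gaussian a x * partial i P x + gaussian a x * complex_of_real (2 * a * (x$i)) * P x" for i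
    using partial_mult[OF gaussian_differentiable poly_fun_differentiable[OF P]]
    by (simp add: partial_gaussian algebra_simps)
  then have "euler_op (\<lambda>x. gaussian a x * P x) x = gaussian a x * euler_op P x
      + gaussian a x * (complex_of_real (2 * a) * (\<Sum>i\<in>UNIV. complex_of_real (x$i * x$i))) * P x"
    by (simp add: euler_op_def algebra_simps sum.distrib sum_distrib_left sum_distrib_right)
  then show ?thesis
    by (simp add: power2_norm_eq_inner inner_vec_def of_real_sum algebra_simps)
qed

definition D_plus_sq :: "(real^'n \<Rightarrow> complex) \<Rightarrow> real^'n \<Rightarrow> complex" where
  "D_plus_sq P x = - dunkl_laplacian Rp \<kappa> P x - complex_of_real (4 * norm x ^ 2) * P x
    + 2 * (2 * euler_op P x + dunkl_dim Rp \<kappa> * P x)"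

lemma D_plus_sq_eq_sum_conj_dunkl:
  "poly_fun P \<Longrightarrow> D_plus_sq P x = - (\<Sum>i\<in>UNIV. conj_dunkl (-1) i (conj_dunkl (-1) i P) x)"
  by (simp add: D_plus_sq_def sum_conj_dunkl_square algebra_simps)

lemma poly_fun_D_plus_sq:
  assumes "poly_fun P"
  shows "poly_fun (D_plus_sq P)"
proof -
  have "D_plus_sq P = (\<lambda>x. - (\<Sum>i\<in>UNIV. conj_dunkl (-1) i (conj_dunkl (-1) i P) x))"
    using assms by (simp add: fun_eq_iff D_plus_sq_eq_sum_conj_dunkl)
  then show ?thesis
    using assms by (simp add: poly_fun_uminus poly_fun_sum poly_fun_conj_dunkl)
qed

lemma gaussian_intertwines_D_plus_sq:
  assumes P: "poly_fun P"
  shows "(\<lambda>y. - dunkl_laplacian Rp \<kappa> (\<lambda>x. gaussian (-1/2) x * P x) y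
      - complex_of_real (norm y ^ 2) * (gaussian (-1/2) y * P y)
      + 2 * euler_op (\<lambda>x. gaussian (-1/2) x * P x) y + dunkl_dim Rp \<kappa> * (gaussian (-1/2) y * P y))
    = (\<lambda>y. gaussian (-1/2) y * D_plus_sq P y)"
  unfolding dunkl_laplacian_gaussian_mult[OF P] euler_op_gaussian_mult[OF P] sum_conj_dunkl_square[OF P]
    D_plus_sq_def
  by (simp add: power2_eq_square algebra_simps)

lemma gaussian_intertwines_laplacian:
  assumes P: "poly_fun P"
  shows "(\<lambda>y. - dunkl_laplacian Rp \<kappa> (\<lambda>x. gaussian (-1) x * P x) y) = (\<lambda>y. gaussian (-1) y * D_plus_sq P y)"
  unfolding dunkl_laplacian_gaussian_mult[OF P] D_plus_sq_eq_sum_conj_dunkl[OF P] by simp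

lemma funpow_gaussian_intertwines_D_plus_sq:
  assumes "poly_fun P"
  shows "((\<lambda>f y. - dunkl_laplacian Rp \<kappa> f y - complex_of_real (norm y ^ 2) * f y
      + 2 * euler_op f y + dunkl_dim Rp \<kappa> * f y) ^^ n) (\<lambda>y. gaussian (-1/2) y * P y)
    = (\<lambda>y. gaussian (-1/2) y * (D_plus_sq ^^ n) P y)"
  using assms poly_fun_D_plus_sq gaussian_intertwines_D_plus_sq
  by (intro funpow_intertwine[where A = poly_fun and h = "\<lambda>P y. gaussian (-1/2) y * P y"]) simp_all

lemma funpow_gaussian_intertwines_laplacian:
  assumes "poly_fun P"
  shows "((\<lambda>f y. - dunkl_laplacian Rp \<kappa> f y) ^^ n) (\<lambda>y. gaussian (-1) y * P y)
    = (\<lambda>y. gaussian (-1) y * (D_plus_sq ^^ n) P y)"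
  using assms poly_fun_D_plus_sq gaussian_intertwines_laplacian
  by (intro funpow_intertwine[where A = poly_fun and h = "\<lambda>P y. gaussian (-1) y * P y"]) simp_all

end

section \<open>The Clifford-valued operator \<open>D\<^sub>+\<close>\<close>

locale clifford_dunkl_system = dunkl_system R Rp \<kappa>
  for R Rp :: "((real,'n::{finite,linorder}) vec) set" and \<kappa> :: "(real,'n) vec \<Rightarrow> complex"
begin

lemma dunkl_cl_scalar: "dunkl_cl Rp \<kappa> i (\<lambda>x. cl_scalar (P x)) x = cl_scalar (T i P x)"
  by (auto simp: fun_eq_iff dunkl_cl_def cl_scalar_def dunkl_const)

lemma dunkl_cl_vector:
  assumes "\<And>i. poly_fun (V i)"
  shows "dunkl_cl Rp \<kappa> j (\<lambda>x C. \<Sum>i\<in>UNIV. V i x * cl_e i C) x = (\<lambda>A. \<Sum>i\<in>UNIV. T j (V i) x * cl_e i A)"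
proof
  fix A
  have "T j (\<lambda>y. \<Sum>i\<in>UNIV. cl_e i A * V i y) = (\<lambda>y. \<Sum>i\<in>UNIV. cl_e i A * T j (V i) y)"
    using assms by (simp add: dunkl_sum poly_fun_scale dunkl_scale)
  then show "dunkl_cl Rp \<kappa> j (\<lambda>x C. \<Sum>i\<in>UNIV. V i x * cl_e i C) x A = (\<Sum>i\<in>UNIV. T j (V i) x * cl_e i A)"
    by (simp add: dunkl_cl_def mult.commute)
qed

lemma D_plus_scalar:
  "D_plus Rp \<kappa> (\<lambda>x. cl_scalar (P x)) = (\<lambda>x C. \<Sum>i\<in>UNIV. - conj_dunkl (-1) i P x * cl_e i C)"
  by (simp add: fun_eq_iff D_plus_def dunkl_dirac_def dunkl_cl_scalar cl_mult_e_scalar cl_mult_vec_left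
      conj_dunkl_def sum_negf sum_distrib_left algebra_simps flip: sum.distrib)

lemma D_plus_vector:
  assumes "\<And>i. poly_fun (V i)"
  shows "D_plus Rp \<kappa> (\<lambda>x C. \<Sum>i\<in>UNIV. V i x * cl_e i C) x C
    = (\<Sum>j\<in>UNIV. \<Sum>i\<in>UNIV. - conj_dunkl (-1) j (V i) x * cl_mult (cl_e j) (cl_e i) C)"
  unfolding D_plus_def dunkl_dirac_def dunkl_cl_vector[OF assms] cl_mult_vec_left
  unfolding cl_mult_sum_right
  by (simp add: conj_dunkl_def sum_negf sum_distrib_left algebra_simps flip: sum.distrib)

lemma D_plus_D_plus_scalar:
  assumes P: "poly_fun P"
  shows "D_plus Rp \<kappa> (D_plus Rp \<kappa> (\<lambda>x. cl_scalar (P x))) = (\<lambda>x. cl_scalar (D_plus_sq P x))"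
proof (intro ext)
  fix x C
  define V where "V i = (\<lambda>y. - conj_dunkl (-1) i P y)" for i
  have V: "poly_fun (V i)" for i
    unfolding V_def by (intro poly_fun_uminus poly_fun_conj_dunkl P)
  have neg: "conj_dunkl (-1) j (V i) x = - conj_dunkl (-1) j (conj_dunkl (-1) i P) x" for i j
    unfolding V_def by (simp add: conj_dunkl_uminus poly_fun_conj_dunkl P)
  have "D_plus Rp \<kappa> (\<lambda>x. cl_scalar (P x)) = (\<lambda>x C. \<Sum>i\<in>UNIV. V i x * cl_e i C)"
    by (simp add: D_plus_scalar V_def)
  then have "D_plus Rp \<kappa> (D_plus Rp \<kappa> (\<lambda>x. cl_scalar (P x))) x C
      = (\<Sum>j\<in>UNIV. \<Sum>i\<in>UNIV. conj_dunkl (-1) j (conj_dunkl (-1) i P) x * cl_mult (cl_e j) (cl_e i) C)"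
    by (simp add: D_plus_vector[OF V] neg)
  also have "\<dots> = cl_scalar (- (\<Sum>j\<in>UNIV. conj_dunkl (-1) j (conj_dunkl (-1) j P) x)) C"
    by (rule sum_symmetric_cl_e_e) (rule conj_dunkl_commute[OF P])
  finally show "D_plus Rp \<kappa> (D_plus Rp \<kappa> (\<lambda>x. cl_scalar (P x))) x C = cl_scalar (D_plus_sq P x) C"
    by (simp add: D_plus_sq_eq_sum_conj_dunkl[OF P])
qed

lemma D_plus_funpow_even_scalar:
  assumes "poly_fun P"
  shows "(D_plus Rp \<kappa> ^^ (2 * n)) (\<lambda>x. cl_scalar (P x)) = (\<lambda>x. cl_scalar ((D_plus_sq ^^ n) P x))"
proof -
  have "((D_plus Rp \<kappa> ^^ 2) ^^ n) (\<lambda>x. cl_scalar (P x)) = (\<lambda>x. cl_scalar ((D_plus_sq ^^ n) P x))"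
    using assms poly_fun_D_plus_sq D_plus_D_plus_scalar
    by (intro funpow_intertwine[where A = poly_fun and h = "\<lambda>P x. cl_scalar (P x)"])
      (simp_all add: numeral_2_eq_2)
  then show ?thesis by (simp add: funpow_mult)
qed

end

theorem theorem3p2:
  fixes R Rp :: "((real,'n::{finite,linorder}) vec) set"
    and \<kappa> :: "(real,'n) vec \<Rightarrow> complex"
    and H :: "(real,'n) vec \<Rightarrow> real"
    and k t :: nat
  assumes "root_system R"
    and "positive_subsystem R Rp"
    and "G_invariant R \<kappa>"
    and "dunkl_harmonic Rp \<kappa> k H"
    and "t > 0"
  shows "clifford_hermite Rp \<kappa> (2 * t) H
           = (\<lambda>x. cl_scalar (exp (complex_of_real (norm x ^ 2 / 2)) *
               (((\<lambda>f y. - dunkl_laplacian Rp \<kappa> f y - complex_of_real (norm y ^ 2) * f y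
                         + 2 * euler_op f y + dunkl_dim Rp \<kappa> * f y) ^^ t)
                  (\<lambda>y. exp (complex_of_real (- (norm y ^ 2) / 2)) * complex_of_real (H y))) x))
         \<and> clifford_hermite Rp \<kappa> (2 * t) H
           = (\<lambda>x. cl_scalar (exp (complex_of_real (norm x ^ 2)) *
               (((\<lambda>f y. - dunkl_laplacian Rp \<kappa> f y) ^^ t)
                  (\<lambda>y. exp (complex_of_real (- (norm y ^ 2))) * complex_of_real (H y))) x))"
proof -
  interpret clifford_dunkl_system R Rp \<kappa> by unfold_locales (fact assms)+
  define P where "P = (\<lambda>y. complex_of_real (H y))"
  have P: "poly_fun P"
    using assms(4) homogeneous_poly_imp_poly_fun by (auto simp: dunkl_harmonic_def P_def)
  have "clifford_hermite Rp \<kappa> (2 * t) H = (\<lambda>x. cl_scalar ((D_plus_sq ^^ t) P x))"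
    using D_plus_funpow_even_scalar[OF P] by (simp add: clifford_hermite_def P_def)
  moreover have "exp (complex_of_real (norm x ^ 2 / 2)) * gaussian (-1/2) x = 1"
    "exp (complex_of_real (norm x ^ 2)) * gaussian (-1) x = 1" for x :: "(real,'n) vec"
    by (simp_all add: gaussian_def flip: exp_add)
  ultimately show ?thesis
    using funpow_gaussian_intertwines_D_plus_sq[OF P] funpow_gaussian_intertwines_laplacian[OF P]
    by (simp add: gaussian_def P_def mult.assoc[symmetric])
qed

end
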